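(* For any $n\ge 1$, the degree polynomial of $(\mathsf{Tr}(n),\preccurlyeq)$ is $$\mathrm{d}_{\mathsf{Tr}(n)}(x,y)=(x+y)^{n-2}\left(x^2+(n+1)xy+y^2\right).$$
   Context: A triword of size $n$ is a word $u=u_1\cdots u_n$ with $u_i\in\{0,1,2\}$, $u_1\ne 2$, and such that $u_i=0$ implies $u_j\neq 1$ for all $j>i$; $\mathsf{Tr}(n)$ is their set, ordered componentwise ($u\preccurlyeq v$ iff $u_i\le v_i$ for all $i$). The degree polynomial is $\mathrm{d}_{\mathsf{Tr}(n)}(x,y)=\sum_{u\in\mathsf{Tr}(n)}x^{\mathrm{in}(u)}y^{\mathrm{out}(u)}$, where $\mathrm{in}(u)$ (resp. $\mathrm{out}(u)$) is the number of elements covered by (resp. covering) $u$. (For $n=1$ the formula is read as the rational expression, equal to $x+y$.) *)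

theory Defs
  imports Complex_Main
begin

definition triwords :: "nat \<Rightarrow> nat list set" where
  "triwords n = {u. length u = n \<and> set u \<subseteq> {0,1,2} \<and> (n \<ge> 1 \<longrightarrow> u ! 0 \<noteq> 2)
     \<and> (\<forall>i j. i < j \<and> j < n \<and> u ! i = 0 \<longrightarrow> u ! j \<noteq> 1)}"

definition tw_le :: "nat list \<Rightarrow> nat list \<Rightarrow> bool" where
  "tw_le u v \<longleftrightarrow> length u = length v \<and> (\<forall>i < length u. u ! i \<le> v ! i)"

definition tw_covers :: "nat \<Rightarrow> nat list \<Rightarrow> nat list \<Rightarrow> bool" where
  "tw_covers n v u \<longleftrightarrow> u \<in> triwords n \<and> v \<in> triwords n \<and> tw_le u v \<and> u \<noteq> v
     \<and> \<not> (\<exists>w \<in> triwords n. tw_le u w \<and> tw_le w v \<and> w \<noteq> u \<and> w \<noteq> v)"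

definition tw_in :: "nat \<Rightarrow> nat list \<Rightarrow> nat" where
  "tw_in n u = card {v \<in> triwords n. tw_covers n u v}"

definition tw_out :: "nat \<Rightarrow> nat list \<Rightarrow> nat" where
  "tw_out n u = card {v \<in> triwords n. tw_covers n v u}"

definition degree_poly :: "nat \<Rightarrow> real \<Rightarrow> real \<Rightarrow> real" where
  "degree_poly n x y = (\<Sum>u \<in> triwords n. x ^ tw_in n u * y ^ tw_out n u)"

end

theory Submission
  imports Defs
begin

(* A cover relation of Tr(n) changes a single letter: if u < v, then lowering v, at the last
   position where the two words differ, to the letter of u stays in Tr(n).  Checking which
   one-letter changes are admissible and skip no intermediate triword gives
     in(u) = #2(u) + [u_1 = 1]   and   out(u) = #0(u) + #1(u_2 ... u_n).
   Triwords of size n + 1 arise from those of size n by appending a letter, where 1 is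
   forbidden once a 0 has occurred.  Hence the sum D_n of x^in(u) y^out(u) over Tr(n) and the
   sum Z_n over the triwords without 0 satisfy
     D_(n+1) = (x + y) D_n + y Z_n,   Z_(n+1) = (x + y) Z_n,   D_1 = x + y,   Z_1 = x,
   so that D_n = (x + y)^n + (n - 1) x y (x + y)^(n - 2). *)

lemma triwords_iff:
  "u \<in> triwords n \<longleftrightarrow> length u = n \<and> (\<forall>i<n. u!i \<le> 2) \<and> (0 < n \<longrightarrow> u!0 \<noteq> 2)
     \<and> (\<forall>i j. i < j \<and> j < n \<and> u!i = 0 \<longrightarrow> u!j \<noteq> 1)"
  by (auto simp: triwords_def set_conv_nth subset_iff Suc_le_eq)

lemma list_update_in_triwords_iff:
  assumes "u \<in> triwords n" and "i < n"
  shows "u[i := c] \<in> triwords n \<longleftrightarrow> c \<le> 2 \<and> (i = 0 \<longrightarrow> c \<noteq> 2)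
     \<and> (c = 0 \<longrightarrow> (\<forall>j. i < j \<and> j < n \<longrightarrow> u!j \<noteq> 1)) \<and> (c = 1 \<longrightarrow> (\<forall>j<i. u!j \<noteq> 0))"
  using assms unfolding triwords_iff by (auto simp: nth_list_update)

lemma tw_le_refl: "tw_le u u"
  by (simp add: tw_le_def)

lemma tw_le_list_update_right:
  assumes "tw_le u v" and "u!i \<le> c"
  shows "tw_le u (v[i := c])"
  using assms by (cases "i < length v") (auto simp: tw_le_def nth_list_update)

lemma tw_le_list_update_left:
  assumes "tw_le u v" and "c \<le> v!i"
  shows "tw_le (u[i := c]) v"
  using assms by (cases "i < length u") (auto simp: tw_le_def nth_list_update)

lemma tw_le_between_list_update:
  assumes "tw_le (u[i := c]) w" and "tw_le w u"
  shows "w = u[i := w!i]"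
proof (rule nth_equalityI)
  show "length w = length (u[i := w!i])" using assms(2) by (simp add: tw_le_def)
next
  fix k assume "k < length w"
  show "w!k = u[i := w!i]!k"
  proof (cases "k = i")
    case False
    have "u[i := c]!k \<le> w!k" "w!k \<le> u!k"
      using assms \<open>k < length w\<close> unfolding tw_le_def by simp_all
    with False show ?thesis by simp
  qed (use assms \<open>k < length w\<close> in \<open>simp add: tw_le_def\<close>)
qed

lemma tw_less_imp_step_down:
  assumes u: "u \<in> triwords n" and v: "v \<in> triwords n" and "tw_le u v" "u \<noteq> v"
  obtains i where "i < n" "u!i < v!i" "v[i := u!i] \<in> triwords n"
proof -
  have le: "u!k \<le> v!k" if "k < n" for k
    using assms(3) that u by (auto simp: tw_le_def triwords_iff)
  define D where "D = {i. i < n \<and> u!i \<noteq> v!i}"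
  have "finite D" by (simp add: D_def)
  moreover have "D \<noteq> {}"
    using assms(4) u v by (auto simp: D_def triwords_iff list_eq_iff_nth_eq)
  ultimately have "Max D \<in> D" by (rule Max_in)
  have above_Max: "u!k = v!k" if "Max D < k" "k < n" for k
  proof -
    have "k \<notin> D" using Max_ge[OF \<open>finite D\<close>, of k] that(1) by linarith
    with that(2) show ?thesis by (simp add: D_def)
  qed
  define m where "m = Max D"
  have m: "m < n" "u!m < v!m"
    using \<open>Max D \<in> D\<close> le by (auto simp: D_def m_def order_le_neq_trans)
  have u_props: "\<forall>i<n. u!i \<le> 2" "0 < n \<longrightarrow> u!0 \<noteq> 2"
      "\<forall>i j. i < j \<and> j < n \<and> u!i = 0 \<longrightarrow> u!j \<noteq> 1"
    using u unfolding triwords_iff by blast+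
  have "v[m := u!m] \<in> triwords n"
    unfolding list_update_in_triwords_iff[OF v m(1)]
  proof (intro conjI impI allI)
    show "u!m \<le> 2" "m = 0 \<Longrightarrow> u!m \<noteq> 2" using u_props m(1) by auto
    show "v!j \<noteq> 1" if "u!m = 0" "m < j \<and> j < n" for j
      using that u_props above_Max by (metis m_def)
    show "v!j \<noteq> 0" if "u!m = 1" "j < m" for j
      using that u_props le[of j] m(1) by (metis le_zero_eq less_trans)
  qed
  with m that show thesis by blast
qed

lemma tw_covers_imp_list_update:
  assumes a: "a \<in> triwords n" and b: "b \<in> triwords n" and "tw_covers n a b"
  obtains i c where "i < n" "c < a!i" "b = a[i := c]" "\<not> (c = 0 \<and> a!i = 2 \<and> a[i := 1] \<in> triwords n)"
proof -
  have le: "tw_le b a" and "b \<noteq> a"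
    and between: "\<And>w. w \<in> triwords n \<Longrightarrow> tw_le b w \<Longrightarrow> tw_le w a \<Longrightarrow> w = b \<or> w = a"
    using assms(3) unfolding tw_covers_def by blast+
  obtain i where i: "i < n" "b!i < a!i" and step: "a[i := b!i] \<in> triwords n"
    using tw_less_imp_step_down[OF b a le \<open>b \<noteq> a\<close>] by blast
  have la: "length a = n" using a by (simp add: triwords_iff)
  have "a[i := b!i] \<noteq> a" using i la by (metis less_irrefl nth_list_update_eq)
  moreover have "tw_le b (a[i := b!i])" "tw_le (a[i := b!i]) a"
    using le i tw_le_refl by (auto intro: tw_le_list_update_right tw_le_list_update_left)
  ultimately have b_eq: "b = a[i := b!i]" using between[OF step] by metis
  have "\<not> (b!i = 0 \<and> a!i = 2 \<and> a[i := 1] \<in> triwords n)"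
  proof
    assume *: "b!i = 0 \<and> a!i = 2 \<and> a[i := 1] \<in> triwords n"
    have "tw_le b (a[i := 1])" "tw_le (a[i := 1]) a"
      using le * tw_le_refl by (auto intro: tw_le_list_update_right tw_le_list_update_left)
    moreover have "a[i := 1] \<noteq> b" "a[i := 1] \<noteq> a"
      using * i la by (auto dest: arg_cong[where f = "\<lambda>l. l!i"])
    ultimately show False using between * by blast
  qed
  with i b_eq that show thesis by blast
qed

lemma tw_covers_list_update:
  assumes a: "a \<in> triwords n" and step: "a[i := c] \<in> triwords n" and "i < n" "c < a!i"
    and no_middle: "\<not> (c = 0 \<and> a!i = 2 \<and> a[i := 1] \<in> triwords n)"
  shows "tw_covers n a (a[i := c])"
proof -
  have la: "length a = n" using a by (simp add: triwords_iff)
  have le: "tw_le (a[i := c]) a"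
    using assms(4) tw_le_refl by (metis less_imp_le tw_le_list_update_left)
  have "a[i := c] \<noteq> a" using assms(3,4) la by (metis less_irrefl nth_list_update_eq)
  have "w = a[i := c] \<or> w = a" if w: "w \<in> triwords n" "tw_le (a[i := c]) w" "tw_le w a" for w
  proof (rule ccontr)
    assume ne: "\<not> (w = a[i := c] \<or> w = a)"
    have w_eq: "w = a[i := w!i]"
      using tw_le_between_list_update w(2,3) by metis
    have "c \<le> w!i" "w!i \<le> a!i"
      using w(2,3) assms(3) la unfolding tw_le_def by auto
    moreover have "a!i \<le> 2" using a assms(3) by (simp add: triwords_iff)
    moreover have "w!i \<noteq> c" "w!i \<noteq> a!i"
      using ne w_eq by (metis, metis list_update_id)
    ultimately have "c = 0" "a!i = 2" "w!i = 1" by linarith+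
    with no_middle w(1) w_eq show False by metis
  qed
  with a step le \<open>a[i := c] \<noteq> a\<close> show ?thesis
    unfolding tw_covers_def by blast
qed

lemma tw_covers_imp_list_update_upper:
  assumes u: "u \<in> triwords n" and v: "v \<in> triwords n" and "tw_covers n v u"
  obtains i d where "i < n" "u!i < d" "v = u[i := d]" "\<not> (u!i = 0 \<and> d = 2 \<and> u[i := 1] \<in> triwords n)"
proof -
  obtain i c where i: "i < n" "c < v!i" and u_eq: "u = v[i := c]"
    and no_middle: "\<not> (c = 0 \<and> v!i = 2 \<and> v[i := 1] \<in> triwords n)"
    using tw_covers_imp_list_update[OF v u assms(3)] by blast
  have "length v = n" using v by (simp add: triwords_iff)
  then have "u!i = c" "v = u[i := v!i]" "v[i := 1] = u[i := 1]"
    using i(1) u_eq by simp_all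
  with i no_middle that show thesis by metis
qed

lemma lower_covers_eq:
  assumes u: "u \<in> triwords n"
  shows "{v \<in> triwords n. tw_covers n u v} =
    (\<lambda>i. u[i := if u!i = 2 \<and> (\<forall>j<i. u!j \<noteq> 0) then 1 else 0]) `
      {i. i < n \<and> (u!i = 2 \<or> u!i = 1 \<and> (\<forall>j. i < j \<and> j < n \<longrightarrow> u!j \<noteq> 1))}"
proof -
  have u_props: "\<forall>i<n. u!i \<le> 2" "\<forall>i j. i < j \<and> j < n \<and> u!i = 0 \<longrightarrow> u!j \<noteq> 1"
    using u unfolding triwords_iff by blast+
  have one_ok: "u[i := 1] \<in> triwords n \<longleftrightarrow> (\<forall>j<i. u!j \<noteq> 0)" if "i < n" for i
    using list_update_in_triwords_iff[OF u that, of 1] by simp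
  show ?thesis
  proof (intro equalityI subsetI)
    fix v assume "v \<in> {v \<in> triwords n. tw_covers n u v}"
    then have v: "v \<in> triwords n" and cov: "tw_covers n u v" by auto
    obtain i c where i: "i < n" "c < u!i" and v_eq: "v = u[i := c]"
      and no_middle: "\<not> (c = 0 \<and> u!i = 2 \<and> u[i := 1] \<in> triwords n)"
      using tw_covers_imp_list_update[OF u v cov] by blast
    have c_cases: "u!i = 1 \<and> c = 0 \<or> u!i = 2 \<and> c = 1 \<or> u!i = 2 \<and> c = 0"
      using i u_props by fastforce
    show "v \<in> (\<lambda>i. u[i := if u!i = 2 \<and> (\<forall>j<i. u!j \<noteq> 0) then 1 else 0]) `
      {i. i < n \<and> (u!i = 2 \<or> u!i = 1 \<and> (\<forall>j. i < j \<and> j < n \<longrightarrow> u!j \<noteq> 1))}"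
    proof (rule image_eqI[where x = i])
      show "v = u[i := if u!i = 2 \<and> (\<forall>j<i. u!j \<noteq> 0) then 1 else 0]"
        "i \<in> {i. i < n \<and> (u!i = 2 \<or> u!i = 1 \<and> (\<forall>j. i < j \<and> j < n \<longrightarrow> u!j \<noteq> 1))}"
        using one_ok[OF i(1)] list_update_in_triwords_iff[OF u i(1), of c] v v_eq c_cases i no_middle
        by auto
    qed
  next
    fix v assume "v \<in> (\<lambda>i. u[i := if u!i = 2 \<and> (\<forall>j<i. u!j \<noteq> 0) then 1 else 0]) `
      {i. i < n \<and> (u!i = 2 \<or> u!i = 1 \<and> (\<forall>j. i < j \<and> j < n \<longrightarrow> u!j \<noteq> 1))}"
    then obtain i where i: "i < n" "u!i = 2 \<or> u!i = 1 \<and> (\<forall>j. i < j \<and> j < n \<longrightarrow> u!j \<noteq> 1)"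
      and v: "v = u[i := if u!i = 2 \<and> (\<forall>j<i. u!j \<noteq> 0) then 1 else 0]"
      by blast
    have no_one_after: "\<forall>k. i < k \<and> k < n \<longrightarrow> u!k \<noteq> 1" if "j < i" "u!j = 0" for j
      using that u_props(2) by (meson less_trans)
    have "v \<in> triwords n"
      using list_update_in_triwords_iff[OF u i(1)] i v u_props no_one_after by auto
    moreover have "tw_covers n u v"
      unfolding v using \<open>v \<in> triwords n\<close> i one_ok[OF i(1)]
      by (intro tw_covers_list_update[OF u]) (auto simp: v)
    ultimately show "v \<in> {v \<in> triwords n. tw_covers n u v}" by blast
  qed
qed

lemma upper_covers_eq:
  assumes u: "u \<in> triwords n"
  shows "{v \<in> triwords n. tw_covers n v u} =
    (\<lambda>i. u[i := if u!i = 0 \<and> (\<forall>j<i. u!j \<noteq> 0) then 1 else 2]) `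
      {i. i < n \<and> (u!i = 0 \<or> u!i = 1 \<and> i \<noteq> 0)}"
proof -
  have ln: "length u = n" using u by (simp add: triwords_iff)
  have one_ok: "u[i := 1] \<in> triwords n \<longleftrightarrow> (\<forall>j<i. u!j \<noteq> 0)" if "i < n" for i
    using list_update_in_triwords_iff[OF u that, of 1] by simp
  show ?thesis
  proof (intro equalityI subsetI)
    fix v assume "v \<in> {v \<in> triwords n. tw_covers n v u}"
    then have v: "v \<in> triwords n" and cov: "tw_covers n v u" by auto
    obtain i d where i: "i < n" "u!i < d" and v_eq: "v = u[i := d]"
      and no_middle: "\<not> (u!i = 0 \<and> d = 2 \<and> u[i := 1] \<in> triwords n)"
      using tw_covers_imp_list_update_upper[OF u v cov] by blast
    have "d \<le> 2" and d_ok: "i = 0 \<longrightarrow> d \<noteq> 2" "d = 1 \<longrightarrow> (\<forall>j<i. u!j \<noteq> 0)"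
      using v list_update_in_triwords_iff[OF u i(1), of d] unfolding v_eq by simp_all
    then have cases: "u!i = 1 \<and> d = 2 \<or> u!i = 0 \<and> d = 1 \<or> u!i = 0 \<and> d = 2"
      using i(2) by fastforce
    show "v \<in> (\<lambda>i. u[i := if u!i = 0 \<and> (\<forall>j<i. u!j \<noteq> 0) then 1 else 2]) `
      {i. i < n \<and> (u!i = 0 \<or> u!i = 1 \<and> i \<noteq> 0)}"
    proof (rule image_eqI[where x = i])
      show "v = u[i := if u!i = 0 \<and> (\<forall>j<i. u!j \<noteq> 0) then 1 else 2]"
        using cases d_ok one_ok[OF i(1)] no_middle unfolding v_eq by auto
      show "i \<in> {i. i < n \<and> (u!i = 0 \<or> u!i = 1 \<and> i \<noteq> 0)}"
        using cases d_ok i(1) by auto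
    qed
  next
    fix v assume "v \<in> (\<lambda>i. u[i := if u!i = 0 \<and> (\<forall>j<i. u!j \<noteq> 0) then 1 else 2]) `
      {i. i < n \<and> (u!i = 0 \<or> u!i = 1 \<and> i \<noteq> 0)}"
    then obtain i where i: "i < n" "u!i = 0 \<or> u!i = 1 \<and> i \<noteq> 0"
      and v: "v = u[i := if u!i = 0 \<and> (\<forall>j<i. u!j \<noteq> 0) then 1 else 2]"
      by blast
    have v_tr: "v \<in> triwords n"
      using list_update_in_triwords_iff[OF u i(1)] i v by (cases "i = 0") auto
    have "u = v[i := u!i]" "u!i < v!i" using i v ln by auto
    moreover have "\<not> (u!i = 0 \<and> v!i = 2 \<and> v[i := 1] \<in> triwords n)"
      using one_ok[OF i(1)] i v ln by auto
    ultimately have "tw_covers n v u"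
      using tw_covers_list_update[OF v_tr _ i(1), of "u!i"] u by metis
    with v_tr show "v \<in> {v \<in> triwords n. tw_covers n v u}" by blast
  qed
qed

lemma inj_on_list_update:
  assumes "\<forall>i\<in>I. i < length u \<and> f i \<noteq> u!i"
  shows "inj_on (\<lambda>i. u[i := f i]) I"
proof (rule inj_onI)
  fix i j assume ij: "i \<in> I" "j \<in> I" "u[i := f i] = u[j := f j]"
  show "i = j"
  proof (rule ccontr)
    assume "i \<noteq> j"
    then have "u[j := f j] ! i = u!i" by simp
    with ij assms show False by (metis nth_list_update_eq)
  qed
qed

lemma card_last_occurrence:
  fixes n :: nat
  shows "card {i. i < n \<and> P i \<and> (\<forall>j. i < j \<and> j < n \<longrightarrow> \<not> P j)} = of_bool (\<exists>i<n. P i)"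
proof (cases "\<exists>i<n. P i")
  case True
  define m where "m = Max {i. i < n \<and> P i}"
  have fin: "finite {i. i < n \<and> P i}" by simp
  have m: "m < n" "P m" using Max_in[OF fin] True by (auto simp: m_def)
  have le_m: "i \<le> m" if "i < n" "P i" for i using Max_ge[OF fin] that by (simp add: m_def)
  have "{i. i < n \<and> P i \<and> (\<forall>j. i < j \<and> j < n \<longrightarrow> \<not> P j)} = {m}"
    using m le_m by (auto simp: le_less) (meson le_m not_le)+
  with True show ?thesis by simp
next
  case False
  then have "{i. i < n \<and> P i \<and> (\<forall>j. i < j \<and> j < n \<longrightarrow> \<not> P j)} = {}" by auto
  with False show ?thesis by (simp only: card.empty of_bool_eq(1))
qed

lemma card_nth_eq_count_list: "card {i. i < length u \<and> u!i = c} = count_list u c"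
  by (simp add: count_list_eq_length_filter length_filter_conv_card eq_commute)

lemma card_nth_nonzero_eq_count_list_tl: "card {i. i < length u \<and> i \<noteq> 0 \<and> u!i = c} = count_list (tl u) c"
proof (cases u)
  case (Cons a t)
  have "{i. i < length u \<and> i \<noteq> 0 \<and> u!i = c} = Suc ` {i. i < length t \<and> t!i = c}"
    using Cons by (auto simp: image_iff gr0_conv_Suc)
  then show ?thesis
    using Cons card_nth_eq_count_list[of t c] by (simp add: card_image)
qed simp

lemma tw_in_eq:
  assumes u: "u \<in> triwords n" and "0 < n"
  shows "tw_in n u = count_list u 2 + of_bool (u!0 = 1)"
proof -
  have ln: "length u = n" and u_props: "\<forall>i<n. u!i \<le> 2" "u!0 \<noteq> 2"
    "\<forall>i j. i < j \<and> j < n \<and> u!i = 0 \<longrightarrow> u!j \<noteq> 1"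
    using u \<open>0 < n\<close> unfolding triwords_iff by blast+
  let ?last_one = "\<lambda>i. u!i = 1 \<and> (\<forall>j. i < j \<and> j < n \<longrightarrow> u!j \<noteq> 1)"
  have "tw_in n u = card {i. i < n \<and> (u!i = 2 \<or> ?last_one i)}"
    unfolding tw_in_def lower_covers_eq[OF u]
    by (rule card_image, rule inj_on_list_update) (auto simp: ln)
  also have "{i. i < n \<and> (u!i = 2 \<or> ?last_one i)} = {i. i < n \<and> u!i = 2} \<union> {i. i < n \<and> ?last_one i}"
    by auto
  also have "card \<dots> = card {i. i < n \<and> u!i = 2} + card {i. i < n \<and> ?last_one i}"
    by (rule card_Un_disjoint) auto
  also have "\<dots> = count_list u 2 + of_bool (\<exists>i<n. u!i = 1)"
    using card_nth_eq_count_list[of u 2] card_last_occurrence[of n "\<lambda>i. u!i = 1"] ln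
    by (simp only: conj_assoc)
  also have "(\<exists>i<n. u!i = 1) \<longleftrightarrow> u!0 = 1"
  proof
    assume "\<exists>i<n. u!i = 1"
    then obtain i where "i < n" "u!i = 1" by blast
    then have "u!0 \<noteq> 0" using u_props(3) by (metis gr0I zero_neq_one)
    moreover have "u!0 \<le> 2" using u_props(1) \<open>0 < n\<close> by blast
    ultimately show "u!0 = 1" using u_props(2) by linarith
  qed (use \<open>0 < n\<close> in blast)
  finally show ?thesis .
qed

lemma tw_out_eq:
  assumes u: "u \<in> triwords n"
  shows "tw_out n u = count_list u 0 + count_list (tl u) 1"
proof -
  have ln: "length u = n" using u by (simp add: triwords_iff)
  have "tw_out n u = card {i. i < n \<and> (u!i = 0 \<or> u!i = 1 \<and> i \<noteq> 0)}"
    unfolding tw_out_def upper_covers_eq[OF u]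
    by (rule card_image, rule inj_on_list_update) (auto simp: ln)
  also have "{i. i < n \<and> (u!i = 0 \<or> u!i = 1 \<and> i \<noteq> 0)} = {i. i < n \<and> u!i = 0} \<union> {i. i < n \<and> i \<noteq> 0 \<and> u!i = 1}"
    by auto
  also have "card \<dots> = card {i. i < n \<and> u!i = 0} + card {i. i < n \<and> i \<noteq> 0 \<and> u!i = 1}"
    by (rule card_Un_disjoint) auto
  also have "\<dots> = count_list u 0 + count_list (tl u) 1"
    using card_nth_eq_count_list[of u 0] card_nth_nonzero_eq_count_list_tl[of u 1] ln by (simp only:)
  finally show ?thesis .
qed

lemma finite_triwords: "finite (triwords n)"
proof (rule finite_subset)
  show "triwords n \<subseteq> {xs. set xs \<subseteq> {0, 1, 2} \<and> length xs = n}"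
    by (auto simp: triwords_def)
  show "finite {xs. set xs \<subseteq> {0::nat, 1, 2} \<and> length xs = n}"
    by (rule finite_lists_length_eq) simp
qed

lemma triwords_Suc_0: "triwords (Suc 0) = {[0], [1]}"
proof (intro equalityI subsetI)
  fix u assume u: "u \<in> triwords (Suc 0)"
  then obtain a where "u = [a]" by (auto simp: triwords_iff length_Suc_conv)
  with u show "u \<in> {[0], [1]}" by (auto simp: triwords_iff)
qed (auto simp: triwords_iff)

lemma snoc_in_triwords_iff:
  assumes "length w = n" and "0 < n"
  shows "w @ [c] \<in> triwords (Suc n) \<longleftrightarrow> w \<in> triwords n \<and> c \<le> 2 \<and> (0 \<in> set w \<longrightarrow> c \<noteq> 1)"
proof -
  have letters: "(\<forall>i<Suc n. (w @ [c])!i \<le> 2) \<longleftrightarrow> (\<forall>i<n. w!i \<le> 2) \<and> c \<le> 2"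
    using assms(1) by (auto simp: nth_append less_Suc_eq)
  have zero_one: "(\<forall>i j. i < j \<and> j < Suc n \<and> (w @ [c])!i = 0 \<longrightarrow> (w @ [c])!j \<noteq> 1) \<longleftrightarrow>
      (\<forall>i j. i < j \<and> j < n \<and> w!i = 0 \<longrightarrow> w!j \<noteq> 1) \<and> (0 \<in> set w \<longrightarrow> c \<noteq> 1)"
  proof (intro iffI conjI allI impI)
    fix i j assume H: "\<forall>i j. i < j \<and> j < Suc n \<and> (w @ [c])!i = 0 \<longrightarrow> (w @ [c])!j \<noteq> 1"
    show "w!j \<noteq> 1" if "i < j \<and> j < n \<and> w!i = 0"
      using H[rule_format, of i j] that assms(1) by (simp add: nth_append)
  next
    assume H: "\<forall>i j. i < j \<and> j < Suc n \<and> (w @ [c])!i = 0 \<longrightarrow> (w @ [c])!j \<noteq> 1" "0 \<in> set w"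
    then obtain i where "i < n" "w!i = 0" using assms(1) by (auto simp: in_set_conv_nth)
    then show "c \<noteq> 1" using H(1)[rule_format, of i n] assms(1) by (simp add: nth_append)
  next
    fix i j
    assume H: "(\<forall>i j. i < j \<and> j < n \<and> w!i = 0 \<longrightarrow> w!j \<noteq> 1) \<and> (0 \<in> set w \<longrightarrow> c \<noteq> 1)"
      and ij: "i < j \<and> j < Suc n \<and> (w @ [c])!i = 0"
    then have "i < n" "w!i = 0" using assms(1) by (auto simp: nth_append)
    show "(w @ [c])!j \<noteq> 1"
    proof (cases "j < n")
      case True
      then show ?thesis using H ij \<open>w!i = 0\<close> assms(1) by (auto simp: nth_append)
    next
      case False
      then have "j = n" using ij by simp
      moreover have "0 \<in> set w" using \<open>i < n\<close> \<open>w!i = 0\<close> assms(1) by (metis nth_mem)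
      ultimately show ?thesis using H assms(1) by (simp add: nth_append)
    qed
  qed
  show ?thesis
    unfolding triwords_iff letters zero_one using assms by (auto simp: nth_append)
qed

lemma triwords_Suc:
  assumes "0 < n"
  shows "triwords (Suc n) =
    (\<lambda>(w, c). w @ [c]) ` (SIGMA w:triwords n. {c. c \<le> 2 \<and> (0 \<in> set w \<longrightarrow> c \<noteq> 1)})"
proof (intro equalityI subsetI)
  fix u assume u: "u \<in> triwords (Suc n)"
  then have "length u = Suc n" by (simp add: triwords_iff)
  then have u_eq: "u = butlast u @ [last u]" and len: "length (butlast u) = n"
    by (metis append_butlast_last_id list.size(3) nat.distinct(1), simp)
  have "butlast u \<in> triwords n \<and> last u \<le> 2 \<and> (0 \<in> set (butlast u) \<longrightarrow> last u \<noteq> 1)"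
    using u u_eq snoc_in_triwords_iff[OF len assms, of "last u"] by metis
  then show "u \<in> (\<lambda>(w, c). w @ [c]) ` (SIGMA w:triwords n. {c. c \<le> 2 \<and> (0 \<in> set w \<longrightarrow> c \<noteq> 1)})"
    using u_eq by (intro image_eqI[where x = "(butlast u, last u)"]) auto
next
  fix u assume "u \<in> (\<lambda>(w, c). w @ [c]) ` (SIGMA w:triwords n. {c. c \<le> 2 \<and> (0 \<in> set w \<longrightarrow> c \<noteq> 1)})"
  then obtain w c where "u = w @ [c]" "w \<in> triwords n" "c \<le> 2" "0 \<in> set w \<longrightarrow> c \<noteq> 1"
    by auto
  moreover have "length w = n" using \<open>w \<in> triwords n\<close> by (simp add: triwords_iff)
  ultimately show "u \<in> triwords (Suc n)"
    using snoc_in_triwords_iff[OF _ assms] by blast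
qed

lemma sum_triwords_Suc:
  assumes "0 < n"
  shows "(\<Sum>u\<in>triwords (Suc n). f u) =
    (\<Sum>w\<in>triwords n. \<Sum>c | c \<le> 2 \<and> (0 \<in> set w \<longrightarrow> c \<noteq> 1). f (w @ [c]))"
proof -
  have "inj_on (\<lambda>(w, c). w @ [c]) (SIGMA w:triwords n. {c. c \<le> 2 \<and> (0 \<in> set w \<longrightarrow> c \<noteq> 1)})"
    by (auto simp: inj_on_def)
  then have "(\<Sum>u\<in>triwords (Suc n). f u) =
      (\<Sum>(w, c)\<in>(SIGMA w:triwords n. {c. c \<le> 2 \<and> (0 \<in> set w \<longrightarrow> c \<noteq> 1)}). f (w @ [c]))"
    unfolding triwords_Suc[OF assms] by (subst sum.reindex) (auto simp: case_prod_beta)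
  also have "\<dots> = (\<Sum>w\<in>triwords n. \<Sum>c | c \<le> 2 \<and> (0 \<in> set w \<longrightarrow> c \<noteq> 1). f (w @ [c]))"
    by (rule sum.Sigma[symmetric]) (simp_all add: finite_triwords)
  finally show ?thesis .
qed

definition tw_weight :: "real \<Rightarrow> real \<Rightarrow> nat list \<Rightarrow> real" where
  "tw_weight x y u = x ^ (count_list u 2 + of_bool (u!0 = 1)) * y ^ (count_list u 0 + count_list (tl u) 1)"

lemma degree_poly_eq_sum_tw_weight:
  assumes "0 < n"
  shows "degree_poly n x y = (\<Sum>u\<in>triwords n. tw_weight x y u)"
  unfolding degree_poly_def tw_weight_def
  using tw_in_eq[OF _ assms] tw_out_eq by (intro sum.cong) simp_all

lemma tw_weight_snoc:
  assumes "w \<noteq> []" and "c \<le> 2"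
  shows "tw_weight x y (w @ [c]) = tw_weight x y w * (if c = 2 then x else y)"
proof -
  have "c = 0 \<or> c = 1 \<or> c = 2" using assms(2) by linarith
  with assms(1) show ?thesis
    by (auto simp: tw_weight_def nth_append)
qed

lemma snoc_letters_eq:
  "{c::nat. c \<le> 2 \<and> (0 \<in> set w \<longrightarrow> c \<noteq> 1)} = (if 0 \<in> set w then {0, 2} else {0, 1, 2})"
  by auto

lemma sum_tw_weight_zero_free:
  "(\<Sum>u\<in>{u \<in> triwords (Suc m). 0 \<notin> set u}. tw_weight x y u) = x * (x + y) ^ m"
proof (induction m)
  case 0
  have "{u \<in> triwords (Suc 0). 0 \<notin> set u} = {[1]}" by (auto simp: triwords_Suc_0)
  then show ?case by (simp only:) (simp add: tw_weight_def)
next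
  case (Suc m)
  have "(\<Sum>u\<in>{u \<in> triwords (Suc (Suc m)). 0 \<notin> set u}. tw_weight x y u) =
      (\<Sum>u\<in>triwords (Suc (Suc m)). if 0 \<notin> set u then tw_weight x y u else 0)"
    by (simp add: sum.inter_filter finite_triwords)
  also have "\<dots> = (\<Sum>w\<in>triwords (Suc m). \<Sum>c | c \<le> 2 \<and> (0 \<in> set w \<longrightarrow> c \<noteq> 1).
      if 0 \<notin> set (w @ [c]) then tw_weight x y (w @ [c]) else 0)"
    using sum_triwords_Suc[of "Suc m" "\<lambda>u. if 0 \<notin> set u then tw_weight x y u else 0"] by simp
  also have "\<dots> = (\<Sum>w\<in>triwords (Suc m). (x + y) * (if 0 \<notin> set w then tw_weight x y w else 0))"
  proof (rule sum.cong[OF refl])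
    fix w assume "w \<in> triwords (Suc m)"
    then have "w \<noteq> []" by (auto simp: triwords_iff)
    then show "(\<Sum>c | c \<le> 2 \<and> (0 \<in> set w \<longrightarrow> c \<noteq> 1).
        if 0 \<notin> set (w @ [c]) then tw_weight x y (w @ [c]) else 0) =
      (x + y) * (if 0 \<notin> set w then tw_weight x y w else 0)"
      unfolding snoc_letters_eq by (simp add: tw_weight_snoc algebra_simps)
  qed
  also have "\<dots> = (x + y) * (\<Sum>u\<in>{u \<in> triwords (Suc m). 0 \<notin> set u}. tw_weight x y u)"
    by (simp add: sum_distrib_left sum.inter_filter finite_triwords)
  finally show ?case using Suc.IH by simp
qed

lemma sum_tw_weight_Suc:
  assumes "0 < n"
  shows "(\<Sum>u\<in>triwords (Suc n). tw_weight x y u) =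
    (x + y) * (\<Sum>u\<in>triwords n. tw_weight x y u) + y * (\<Sum>u\<in>{u \<in> triwords n. 0 \<notin> set u}. tw_weight x y u)"
proof -
  have "(\<Sum>u\<in>triwords (Suc n). tw_weight x y u) =
      (\<Sum>w\<in>triwords n. \<Sum>c | c \<le> 2 \<and> (0 \<in> set w \<longrightarrow> c \<noteq> 1). tw_weight x y (w @ [c]))"
    by (rule sum_triwords_Suc[OF assms])
  also have "\<dots> = (\<Sum>w\<in>triwords n. (x + y) * tw_weight x y w + y * (if 0 \<notin> set w then tw_weight x y w else 0))"
  proof (rule sum.cong[OF refl])
    fix w assume "w \<in> triwords n"
    then have "w \<noteq> []" using assms by (auto simp: triwords_iff)
    then show "(\<Sum>c | c \<le> 2 \<and> (0 \<in> set w \<longrightarrow> c \<noteq> 1). tw_weight x y (w @ [c])) =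
      (x + y) * tw_weight x y w + y * (if 0 \<notin> set w then tw_weight x y w else 0)"
      unfolding snoc_letters_eq by (simp add: tw_weight_snoc algebra_simps)
  qed
  also have "\<dots> = (x + y) * (\<Sum>u\<in>triwords n. tw_weight x y u) + y * (\<Sum>u\<in>{u \<in> triwords n. 0 \<notin> set u}. tw_weight x y u)"
    by (simp add: sum.distrib sum_distrib_left sum.inter_filter finite_triwords)
  finally show ?thesis .
qed

lemma sum_tw_weight:
  "(\<Sum>u\<in>triwords (Suc m). tw_weight x y u) = (x + y) ^ Suc m + real m * x * y * (x + y) ^ (m - 1)"
proof (induction m)
  case 0
  show ?case by (simp add: triwords_Suc_0 tw_weight_def)
next
  case (Suc m)
  have "(x + y) * (real m * x * y * (x + y) ^ (m - 1)) = real m * x * y * (x + y) ^ m"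
    by (cases m) simp_all
  then show ?case
    using sum_tw_weight_Suc[where n = "Suc m" and x = x and y = y] Suc.IH
      sum_tw_weight_zero_free[where m = m and x = x and y = y]
    by (simp add: algebra_simps)
qed

lemma closed_form_eq_powi:
  fixes x y :: real
  shows "(x + y) ^ Suc m + real m * x * y * (x + y) ^ (m - 1)
    = (x + y) powi (int (Suc m) - 2) * (x\<^sup>2 + (real (Suc m) + 1) * x * y + y\<^sup>2)"
proof (cases m)
  case 0
  have "(x + y) ^ Suc m + real m * x * y * (x + y) ^ (m - 1) = inverse (x + y) * ((x + y) * (x + y))"
    using 0 by (cases "x + y = 0") (simp_all add: field_simps)
  also have "inverse (x + y) = (x + y) powi (int (Suc m) - 2)"
    using 0 by (simp add: power_int_minus)
  also have "(x + y) * (x + y) = x\<^sup>2 + (real (Suc m) + 1) * x * y + y\<^sup>2"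
    using 0 by (simp add: power2_eq_square algebra_simps)
  finally show ?thesis .
next
  case (Suc k)
  have "(x + y) ^ Suc m + real m * x * y * (x + y) ^ (m - 1) = (x + y) ^ k * ((x + y)\<^sup>2 + real m * x * y)"
    using Suc by (simp add: power2_eq_square algebra_simps)
  also have "(x + y) ^ k = (x + y) powi (int (Suc m) - 2)"
    using Suc by simp
  also have "(x + y)\<^sup>2 + real m * x * y = x\<^sup>2 + (real (Suc m) + 1) * x * y + y\<^sup>2"
    by (simp add: power2_sum algebra_simps)
  finally show ?thesis .
qed

theorem mainTheorem14:
  fixes n :: nat and x y :: real
  assumes "n \<ge> 1"
  shows "degree_poly n x y
           = (x + y) powi (int n - 2) * (x\<^sup>2 + (real n + 1) * x * y + y\<^sup>2)"
proof -
  obtain m where n: "n = Suc m" using assms by (cases n) auto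
  have "degree_poly n x y = (\<Sum>u\<in>triwords (Suc m). tw_weight x y u)"
    using degree_poly_eq_sum_tw_weight n by simp
  also have "\<dots> = (x + y) ^ Suc m + real m * x * y * (x + y) ^ (m - 1)"
    by (rule sum_tw_weight)
  also have "\<dots> = (x + y) powi (int n - 2) * (x\<^sup>2 + (real n + 1) * x * y + y\<^sup>2)"
    unfolding n by (rule closed_form_eq_powi)
  finally show ?thesis .
qed

end
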